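(* Let $T$ be a well-formed trace satisfying the initial-write property. Then $\mathcal{P}(T) \subseteq \mathcal{P}_{PWR}(T)$; that is, every predictable data race pair $(e,f)$ of $T$ is a potential Lockset-PWR data race pair or a potential Lockset-PWR WRD data race pair of $T$.
   Context: Traces. A trace $T$ is a finite sequence of pairwise distinct events. Each event $e$ belongs to a thread $\mathrm{tid}(e)$ and is one of: a read $r(x)$ or write $w(x)$ of a shared variable $x$, or an acquire $acq(y)$ or release $rel(y)$ of a lock $y$. $\mathrm{pos}_T(e)$ is the index of $e$ in $T$. The projection of $T$ onto thread $i$ is the subsequence of events of thread $i$. $T$ is well-formed if a thread only acquires a lock not currently held and every release $rel(y)$ in thread $i$ has a matching earlier acquire $acq(y)$ in thread $i$ with no other acquire on $y$ in between. A critical section $CS$ on lock $y$ consists of a matching acquire/release pair $acq(CS)$, $rel(CS)$ in thread $i$ together with the events of thread $i$ between them; we write $e \in CS$. The lockset $LS(e)$ of an event $e$ is the set of locks $y$ such that $e$ belongs to some critical section on $y$. Two events are conflicting if they are reads/writes on the same variable, at least one is a write, and they belong to different threads. For a read $e$ on $x$, a write $f$ on $x$ is the last write of $e$ w.r.t. $T$ if $f$ precedes $e$ in $T$ and no other write on $x$ lies strictly between them. $T$ satisfies the initial-write property if every read on $x$ is preceded in $T$ by some write on $x$. Correct reordering. $T'$ is a correctly reordered prefix of $T$ if $T'$ is a sequence of some of the events of $T$ such that: (i) for every thread $i$, the projection of $T'$ onto $i$ is a prefix of the projection of $T$ onto $i$; (ii) for every read $e$ in $T'$ whose last write w.r.t.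 $T$ is $f$, $f$ is in $T'$ and is also the last write of $e$ w.r.t. $T'$; (iii) for any two acquires $e_1,e_2$ on the same lock with $e_1$ before $e_2$ in $T'$, the matching release of $e_1$ is in $T'$ and lies strictly between $e_1$ and $e_2$. Predictable races. $(e,f)$ is a predictable data race pair of $T$ if $e,f$ are conflicting events of $T$ and there is a correctly reordered prefix $T'$ of $T$ in which $e$ appears immediately before $f$; if both are writes we additionally require $\mathrm{pos}_T(e)<\mathrm{pos}_T(f)$. $\mathcal{P}(T)$ denotes the set of all such pairs. PWR relation. $<^{PWR}$ is the smallest strict partial order on the events of $T$ such that: (PO) if $\mathrm{tid}(e)=\mathrm{tid}(f)$ and $\mathrm{pos}_T(e)<\mathrm{pos}_T(f)$ then $e<^{PWR}f$; (WRD) if the write $w$ is the last write w.r.t. $T$ of the read $r$ then $w<^{PWR}r$; (ROD) if $CS, CS'$ are distinct critical sections on the same lock, $e\in CS$, $f\in CS'$ and $e<^{PWR}f$, then $rel(CS)<^{PWR}f$. Potential pairs. $(e,f)$ is a potential Lockset-PWR data race pair if $e,f$ are conflicting, $LS(e)\cap LS(f)=\emptyset$, neither $e<^{PWR}f$ nor $f<^{PWR}e$, and either both are writes or $e$ is a read and $f$ a write. $(e,f)$ is a potential Lockset-PWR WRD data race pair if $e,f$ are conflicting, $e$ is a write, $f$ is a read, $LS(e)\cap LS(f)=\emptyset$, $e<^{PWR}f$, and there is no event $g$ with $e<^{PWR}g<^{PWR}f$. $\mathcal{P}_{PWR}(T)$ is the set of all pairs of either kind. *)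

theory Defs
  imports Main "HOL-Library.Sublist"
begin

(* Threads, shared variables and locks are identified by natural numbers.
   Each event carries a unique identifier so that a trace can contain
   several events with the same thread and operation. *)
datatype op = Rd nat | Wr nat | Acq nat | Rel nat

datatype event = Ev (eid: nat) (tid: nat) (act: op)

type_synonym trace = "event list"

definition pos :: "trace \<Rightarrow> event \<Rightarrow> nat" where
  "pos T e = (THE i. i < length T \<and> T ! i = e)"

definition before :: "trace \<Rightarrow> event \<Rightarrow> event \<Rightarrow> bool" where
  "before T e f \<longleftrightarrow> e \<in> set T \<and> f \<in> set T \<and> pos T e < pos T f"

definition strictly_between :: "trace \<Rightarrow> event \<Rightarrow> event \<Rightarrow> event \<Rightarrow> bool" where
  "strictly_between T a m b \<longleftrightarrow> before T a m \<and> before T m b"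

definition is_read :: "event \<Rightarrow> bool" where
  "is_read e \<longleftrightarrow> (\<exists>x. act e = Rd x)"

definition is_write :: "event \<Rightarrow> bool" where
  "is_write e \<longleftrightarrow> (\<exists>x. act e = Wr x)"

definition accesses :: "event \<Rightarrow> nat \<Rightarrow> bool" where
  "accesses e x \<longleftrightarrow> act e = Rd x \<or> act e = Wr x"

definition matches :: "trace \<Rightarrow> event \<Rightarrow> event \<Rightarrow> bool" where
  "matches T a r \<longleftrightarrow> (\<exists>y. act a = Acq y \<and> act r = Rel y \<and> tid a = tid r \<and> before T a r \<and>
      (\<forall>m. strictly_between T a m r \<longrightarrow> act m \<noteq> Acq y \<and> act m \<noteq> Rel y))"

definition held :: "trace \<Rightarrow> nat \<Rightarrow> event \<Rightarrow> bool" where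
  "held T y k \<longleftrightarrow> (\<exists>a. act a = Acq y \<and> before T a k \<and>
      (\<forall>m. strictly_between T a m k \<longrightarrow> act m \<noteq> Rel y))"

definition well_formed :: "trace \<Rightarrow> bool" where
  "well_formed T \<longleftrightarrow> distinct T \<and>
     (\<forall>k \<in> set T. \<forall>y. act k = Acq y \<longrightarrow> \<not> held T y k) \<and>
     (\<forall>r \<in> set T. \<forall>y. act r = Rel y \<longrightarrow> (\<exists>a. matches T a r))"

definition in_CS :: "trace \<Rightarrow> event \<Rightarrow> event \<Rightarrow> event \<Rightarrow> bool" where
  "in_CS T a r e \<longleftrightarrow> matches T a r \<and> e \<in> set T \<and> tid e = tid a \<and>
      \<not> before T e a \<and> \<not> before T r e"

definition lockset :: "trace \<Rightarrow> event \<Rightarrow> nat set" where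
  "lockset T e = {y. \<exists>a r. in_CS T a r e \<and> act a = Acq y}"

definition conflicting :: "event \<Rightarrow> event \<Rightarrow> bool" where
  "conflicting e f \<longleftrightarrow> (\<exists>x. accesses e x \<and> accesses f x) \<and> (is_write e \<or> is_write f)
      \<and> tid e \<noteq> tid f"

definition last_write :: "trace \<Rightarrow> event \<Rightarrow> event \<Rightarrow> bool" where
  "last_write T e f \<longleftrightarrow> (\<exists>x. act e = Rd x \<and> act f = Wr x \<and> before T f e \<and>
      (\<forall>g. strictly_between T f g e \<longrightarrow> act g \<noteq> Wr x))"

definition initial_write :: "trace \<Rightarrow> bool" where
  "initial_write T \<longleftrightarrow> (\<forall>e \<in> set T. \<forall>x. act e = Rd x \<longrightarrow> (\<exists>f. act f = Wr x \<and> before T f e))"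

definition correctly_reordered_prefix :: "trace \<Rightarrow> trace \<Rightarrow> bool" where
  "correctly_reordered_prefix T' T \<longleftrightarrow>
     distinct T' \<and> set T' \<subseteq> set T \<and>
     (\<forall>i. prefix (filter (\<lambda>e. tid e = i) T') (filter (\<lambda>e. tid e = i) T)) \<and>
     (\<forall>e \<in> set T'. \<forall>f. last_write T e f \<longrightarrow> f \<in> set T' \<and> last_write T' e f) \<and>
     (\<forall>e1 e2 y. e1 \<in> set T' \<longrightarrow> e2 \<in> set T' \<longrightarrow> act e1 = Acq y \<longrightarrow> act e2 = Acq y \<longrightarrow>
        before T' e1 e2 \<longrightarrow> (\<exists>r. matches T e1 r \<and> before T' e1 r \<and> before T' r e2))"

definition predictable_race :: "trace \<Rightarrow> event \<Rightarrow> event \<Rightarrow> bool" where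
  "predictable_race T e f \<longleftrightarrow> e \<in> set T \<and> f \<in> set T \<and> conflicting e f \<and>
     (\<exists>T' i. correctly_reordered_prefix T' T \<and> Suc i < length T' \<and> T' ! i = e \<and> T' ! Suc i = f) \<and>
     (is_write e \<and> is_write f \<longrightarrow> pos T e < pos T f)"

definition P :: "trace \<Rightarrow> (event \<times> event) set" where
  "P T = {(e, f). predictable_race T e f}"

inductive pwr :: "trace \<Rightarrow> event \<Rightarrow> event \<Rightarrow> bool" for T where
  PO: "e \<in> set T \<Longrightarrow> f \<in> set T \<Longrightarrow> tid e = tid f \<Longrightarrow> pos T e < pos T f \<Longrightarrow> pwr T e f"
| WRD: "last_write T r w \<Longrightarrow> pwr T w r"
| ROD: "matches T a r \<Longrightarrow> matches T a' r' \<Longrightarrow> (a, r) \<noteq> (a', r') \<Longrightarrow> act a = act a' \<Longrightarrow>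
        in_CS T a r e \<Longrightarrow> in_CS T a' r' f \<Longrightarrow> pwr T e f \<Longrightarrow> pwr T r f"
| trans: "pwr T e g \<Longrightarrow> pwr T g f \<Longrightarrow> pwr T e f"

definition potential_pwr :: "trace \<Rightarrow> event \<Rightarrow> event \<Rightarrow> bool" where
  "potential_pwr T e f \<longleftrightarrow> conflicting e f \<and> lockset T e \<inter> lockset T f = {} \<and>
     \<not> pwr T e f \<and> \<not> pwr T f e \<and>
     ((is_write e \<and> is_write f) \<or> (is_read e \<and> is_write f))"

definition potential_pwr_wrd :: "trace \<Rightarrow> event \<Rightarrow> event \<Rightarrow> bool" where
  "potential_pwr_wrd T e f \<longleftrightarrow> conflicting e f \<and> is_write e \<and> is_read f \<and>
     lockset T e \<inter> lockset T f = {} \<and> pwr T e f \<and> \<not> (\<exists>g. pwr T e g \<and> pwr T g f)"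

definition P_PWR :: "trace \<Rightarrow> (event \<times> event) set" where
  "P_PWR T = {(e, f). potential_pwr T e f \<or> potential_pwr_wrd T e f}"

end

theory Submission
  imports Defs
begin

text \<open>Let the conflicting events e, f be adjacent in a correctly reordered prefix T'. PWR is sound
  for correct reorderings: if a is PWR-before b and b occurs in T', then a occurs earlier in T'.
  Hence f is not PWR-before e, and no event lies PWR-between e and f. If f is a write, the events
  of T' before e followed by f again form a correct reordering, which contains f but not e; so e
  is not PWR-before f either. If f is a read, its last write must be e, so e is WRD-before f.
  Finally, a lock held at both e and f would, by the lock condition on T', put the release of
  e's critical section between e and f, or that of f's critical section before e.\<close>

lemma pos_nth:
  assumes "distinct L" "k < length L"
  shows "pos L (L ! k) = k"
  unfolding pos_def using assms by (auto intro!: the_equality simp: nth_eq_iff_index_eq)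

lemma nth_pos:
  assumes "distinct L" "a \<in> set L"
  shows "pos L a < length L" "L ! pos L a = a"
  using assms pos_nth by (metis in_set_conv_nth)+

lemma pos_append_Cons:
  assumes "distinct (xs @ a # ys)"
  shows "pos (xs @ a # ys) a = length xs"
  using pos_nth[OF assms, of "length xs"] by simp

lemma before_irrefl: "\<not> before L a a"
  unfolding before_def by simp

lemma before_asym: "before L a b \<Longrightarrow> \<not> before L b a"
  unfolding before_def by simp

lemma before_trans: "before L a b \<Longrightarrow> before L b c \<Longrightarrow> before L a c"
  unfolding before_def by simp

lemma before_total:
  assumes "distinct L" "a \<in> set L" "b \<in> set L" "a \<noteq> b"
  shows "before L a b \<or> before L b a"
  unfolding before_def using assms nth_pos by (metis linorder_neqE_nat)

lemma before_append_Cons_left_iff: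
  assumes "distinct (xs @ b # ys)"
  shows "before (xs @ b # ys) a b \<longleftrightarrow> a \<in> set xs"
proof
  let ?L = "xs @ b # ys"
  assume "before ?L a b"
  then have a: "a \<in> set ?L" and lt: "pos ?L a < length xs"
    unfolding before_def using pos_append_Cons[OF assms] by auto
  have "a = xs ! pos ?L a"
    using nth_pos(2)[OF assms a] lt by (simp add: nth_append)
  then show "a \<in> set xs" using lt by (metis nth_mem)
next
  assume "a \<in> set xs"
  then obtain us vs where xs: "xs = us @ a # vs" by (meson split_list)
  have "pos (us @ a # vs @ b # ys) a = length us"
    using pos_append_Cons[of us a "vs @ b # ys"] assms xs by simp
  then show "before (xs @ b # ys) a b"
    unfolding before_def using pos_append_Cons[OF assms] xs by simp
qed

lemma before_append_Cons_right_iff: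
  assumes "distinct (xs @ a # ys)"
  shows "before (xs @ a # ys) a b \<longleftrightarrow> b \<in> set ys"
proof
  let ?L = "xs @ a # ys"
  assume "before ?L a b"
  then have b: "b \<in> set ?L" and gt: "length xs < pos ?L b"
    unfolding before_def using pos_append_Cons[OF assms] by auto
  have "b = ys ! (pos ?L b - Suc (length xs))"
    using nth_pos(2)[OF assms b] gt by (simp add: nth_append)
  moreover have "pos ?L b - Suc (length xs) < length ys"
    using nth_pos(1)[OF assms b] gt by simp
  ultimately show "b \<in> set ys" by (metis nth_mem)
next
  assume "b \<in> set ys"
  then obtain us vs where ys: "ys = us @ b # vs" by (meson split_list)
  have "pos ((xs @ a # us) @ b # vs) b = Suc (length xs + length us)"
    using pos_append_Cons[of "xs @ a # us" b vs] assms ys by simp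
  then show "before (xs @ a # ys) a b"
    unfolding before_def using pos_append_Cons[OF assms] ys by simp
qed

lemma before_append_iff:
  assumes "distinct (xs @ ys)" "b \<in> set xs"
  shows "before (xs @ ys) a b \<longleftrightarrow> before xs a b"
proof -
  obtain us vs where xs: "xs = us @ b # vs" using assms(2) by (meson split_list)
  have "before (us @ b # vs @ ys) a b \<longleftrightarrow> a \<in> set us"
    using assms(1) xs by (intro before_append_Cons_left_iff) simp
  moreover have "before (us @ b # vs) a b \<longleftrightarrow> a \<in> set us"
    using assms(1) xs by (intro before_append_Cons_left_iff) auto
  ultimately show ?thesis using xs by simp
qed

lemma before_filter_iff:
  assumes "distinct L" "Q a" "Q b"
  shows "before (filter Q L) a b \<longleftrightarrow> before L a b"
proof -
  have filter_mono: "before (filter Q L) c d" if cd: "before L c d" "Q c" "Q d" for c d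
  proof -
    obtain us vs where L: "L = us @ d # vs"
      using cd(1) unfolding before_def by (meson split_list)
    then have "c \<in> set (filter Q us)"
      using cd assms(1) before_append_Cons_left_iff by auto
    moreover have "distinct (filter Q us @ d # filter Q vs)"
      using L assms(1) by auto
    ultimately show ?thesis
      using L cd(3) by (simp add: before_append_Cons_left_iff)
  qed
  show ?thesis
  proof
    assume ab: "before (filter Q L) a b"
    then have "a \<in> set L" "b \<in> set L" "a \<noteq> b" unfolding before_def by auto
    then show "before L a b"
      using before_total[OF assms(1)] filter_mono[of b a] assms ab before_asym by blast
  qed (use filter_mono assms in blast)
qed

lemma between_mem:
  assumes "distinct (xs @ a # ys @ b # zs)"
    and "before (xs @ a # ys @ b # zs) a g" "before (xs @ a # ys @ b # zs) g b"
  shows "g \<in> set ys"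
proof -
  have "g \<in> set (ys @ b # zs)"
    using assms(1,2) before_append_Cons_right_iff by blast
  moreover have "g \<in> set (xs @ a # ys)"
    using assms(1,3) before_append_Cons_left_iff[of "xs @ a # ys" b zs] by simp
  ultimately show ?thesis using assms(1) by auto
qed

lemma crp_distinct: "correctly_reordered_prefix T' T \<Longrightarrow> distinct T'"
  unfolding correctly_reordered_prefix_def by blast

lemma crp_subset: "correctly_reordered_prefix T' T \<Longrightarrow> set T' \<subseteq> set T"
  unfolding correctly_reordered_prefix_def by blast

lemma crp_last_write:
  "correctly_reordered_prefix T' T \<Longrightarrow> r \<in> set T' \<Longrightarrow> last_write T r w \<Longrightarrow>
     w \<in> set T' \<and> last_write T' r w"
  unfolding correctly_reordered_prefix_def by blast

lemma crp_release_between: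
  "correctly_reordered_prefix T' T \<Longrightarrow> act a = Acq y \<Longrightarrow> act a' = Acq y \<Longrightarrow> before T' a a' \<Longrightarrow>
     \<exists>r. matches T a r \<and> before T' a r \<and> before T' r a'"
  unfolding correctly_reordered_prefix_def before_def by blast

lemma crp_program_order:
  assumes crp: "correctly_reordered_prefix T' T" and "distinct T"
    and "tid e1 = tid e2" "before T e1 e2" "e2 \<in> set T'"
  shows "before T' e1 e2"
proof -
  let ?Q = "\<lambda>e. tid e = tid e2"
  obtain zs where split: "filter ?Q T = filter ?Q T' @ zs"
    using crp unfolding correctly_reordered_prefix_def by (meson prefixE)
  have "before (filter ?Q T) e1 e2"
    using assms by (simp add: before_filter_iff)
  moreover have "distinct (filter ?Q T' @ zs)"
    using split assms(2) by (metis distinct_filter)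
  ultimately have "before (filter ?Q T') e1 e2"
    using split before_append_iff assms(5) by fastforce
  then show ?thesis
    using crp_distinct[OF crp] assms by (simp add: before_filter_iff)
qed

lemma matches_facts:
  "matches T a r \<Longrightarrow> tid a = tid r \<and> before T a r \<and> (\<exists>y. act a = Acq y \<and> act r = Rel y)"
  unfolding matches_def by auto

lemma matches_unique:
  assumes "distinct T" "matches T a r1" "matches T a r2"
  shows "r1 = r2"
proof (rule ccontr)
  assume "r1 \<noteq> r2"
  then have "before T r1 r2 \<or> before T r2 r1"
    using before_total[OF assms(1)] assms(2,3) unfolding matches_def before_def by blast
  then show False
    using assms(2,3) unfolding matches_def strictly_between_def by auto
qed

lemma in_CS_acquire_in_crp:
  assumes crp: "correctly_reordered_prefix T' T" and "distinct T" "in_CS T a r x" "x \<in> set T'"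
  shows "a = x \<or> before T' a x"
proof (cases "a = x")
  case False
  then have "before T a x"
    using assms before_total unfolding in_CS_def matches_def before_def by metis
  then show ?thesis
    using crp_program_order[OF crp] assms unfolding in_CS_def by metis
qed simp

lemma in_CS_before_release_in_crp:
  assumes crp: "correctly_reordered_prefix T' T" and "distinct T" "in_CS T a r x" "x \<noteq> r"
    and "r \<in> set T'"
  shows "before T' x r"
proof -
  have "before T x r"
    using assms before_total unfolding in_CS_def matches_def before_def by metis
  then show ?thesis
    using crp_program_order[OF crp] assms unfolding in_CS_def matches_def by metis
qed

lemma release_before_in_CS_in_crp:
  assumes crp: "correctly_reordered_prefix T' T" and dT: "distinct T"
    and "matches T a r" "in_CS T a' r' z" "z \<in> set T'" "act a = act a'" "before T' a a'"
  shows "before T' r z"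
proof -
  obtain y where "act a = Acq y" "act a' = Acq y"
    using assms(3,6) matches_facts by metis
  then obtain r0 where "matches T a r0" "before T' r0 a'"
    using crp_release_between[OF crp] assms(7) by blast
  moreover have "a' = z \<or> before T' a' z"
    using in_CS_acquire_in_crp[OF crp dT assms(4,5)] .
  ultimately show ?thesis
    using matches_unique[OF dT] assms(3) before_trans by metis
qed

lemma pwr_in_crp:
  assumes "pwr T a b" "correctly_reordered_prefix T' T" "distinct T" "b \<in> set T'"
  shows "before T' a b"
  using assms
proof (induction rule: pwr.induct)
  case (PO e f)
  then show ?case using crp_program_order unfolding before_def by metis
next
  case (WRD r w)
  then show ?case using crp_last_write unfolding last_write_def by metis
next
  case (ROD a r a' r' e f)
  note crp = ROD.prems(1) and dT = ROD.prems(2)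
  have ef: "before T' e f" using ROD.IH ROD.prems by blast
  then have "e \<in> set T'" unfolding before_def by blast
  then have a: "a = e \<or> before T' a e"
    using in_CS_acquire_in_crp[OF crp dT ROD(5)] by blast
  have a': "a' = f \<or> before T' a' f"
    using in_CS_acquire_in_crp[OF crp dT ROD(6) ROD.prems(3)] .
  have "a \<noteq> a'" using matches_unique[OF dT] ROD(1-3) by metis
  moreover have "a \<in> set T'" "a' \<in> set T'"
    using a a' ef ROD.prems(3) unfolding before_def by auto
  ultimately consider "before T' a a'" | "before T' a' a"
    using before_total[OF crp_distinct[OF crp]] by blast
  then show ?case
  proof cases
    case 1
    then show ?thesis
      using release_before_in_CS_in_crp[OF crp dT ROD(1,6) ROD.prems(3) ROD(4)] by blast
  next
    case 2
    have "before T' r' e"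
      using release_before_in_CS_in_crp[OF crp dT ROD(2,5) \<open>e \<in> set T'\<close>] ROD(4) 2 by simp
    then have r'f: "before T' r' f" using ef before_trans by blast
    then have "before T' f r'"
      using in_CS_before_release_in_crp[OF crp dT ROD(6)] before_irrefl
      unfolding before_def by metis
    then show ?thesis using r'f before_asym by blast
  qed
next
  case (trans e g f)
  then show ?case using before_trans unfolding before_def by metis
qed

lemma last_write_append_iff:
  assumes "distinct (xs @ ys)" "r \<in> set xs"
  shows "last_write (xs @ ys) r w \<longleftrightarrow> last_write xs r w"
proof -
  have order: "before (xs @ ys) a r \<longleftrightarrow> before xs a r" for a
    using before_append_iff[OF assms] .
  have "before (xs @ ys) w g \<longleftrightarrow> before xs w g" if "before xs g r" for g
    using before_append_iff[OF assms(1)] that unfolding before_def by blast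
  then have "strictly_between (xs @ ys) w g r \<longleftrightarrow> strictly_between xs w g r" for g
    unfolding strictly_between_def using order by blast
  then show ?thesis unfolding last_write_def using order by simp
qed

lemma last_write_exists:
  assumes "distinct T" "initial_write T" "r \<in> set T" "act r = Rd x"
  shows "\<exists>w. last_write T r w"
proof -
  obtain us vs where T: "T = us @ r # vs" using assms(3) by (meson split_list)
  obtain w0 where "act w0 = Wr x" "before T w0 r"
    using assms unfolding initial_write_def by blast
  then have "\<exists>w \<in> set us. act w = Wr x"
    using T assms(1) before_append_Cons_left_iff by blast
  then obtain as w bs where us: "us = as @ w # bs" and w: "act w = Wr x"
    and last: "\<forall>g \<in> set bs. act g \<noteq> Wr x"
    by (rule split_list_last_propE)
  have "before T w r"
    using T us assms(1) before_append_Cons_left_iff[of us r vs w] by simp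
  moreover have "act g \<noteq> Wr x" if "strictly_between T w g r" for g
    using between_mem[of as w bs r vs g] that T us assms(1) last
    unfolding strictly_between_def by simp
  ultimately show ?thesis
    unfolding last_write_def using w assms(4) by blast
qed

text \<open>Since e belongs to another thread, removing it keeps the thread projections prefixes; f is
  neither a read nor an acquire, so no last-write or lock condition constrains it.\<close>

lemma crp_drop_before_write:
  assumes crp: "correctly_reordered_prefix (xs @ e # f # ys) T"
    and f: "is_write f" and tid: "tid e \<noteq> tid f"
  shows "correctly_reordered_prefix (xs @ [f]) T"
proof -
  let ?T' = "xs @ e # f # ys" and ?L = "xs @ [f]"
  have dT': "distinct ?T'" using crp_distinct[OF crp] .
  then have dL: "distinct ?L" by auto
  have order: "before ?L a b \<longleftrightarrow> before ?T' a b" if "b \<in> set xs" for a b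
    using before_append_iff[of xs "[f]"] before_append_iff[of xs "e # f # ys"] dL dT' that
    by simp
  have lw: "last_write ?L r w \<longleftrightarrow> last_write ?T' r w" if "r \<in> set xs" for r w
    using last_write_append_iff[of xs "[f]"] last_write_append_iff[of xs "e # f # ys"] dL dT' that
    by simp
  have in_xs: "g \<in> set xs" if "g \<in> set ?L" "\<not> is_write g" for g
    using that f by auto
  have threads: "prefix (filter (\<lambda>g. tid g = t) ?L) (filter (\<lambda>g. tid g = t) T)" for t
  proof -
    have "prefix (filter (\<lambda>g. tid g = t) ?L) (filter (\<lambda>g. tid g = t) ?T')"
      using tid by (cases "tid f = t") (auto simp: prefix_def)
    then show ?thesis
      using crp unfolding correctly_reordered_prefix_def by (meson prefix_order.trans)
  qed
  have last_writes: "w \<in> set ?L \<and> last_write ?L r w" if "r \<in> set ?L" "last_write T r w" for r w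
  proof -
    have "\<not> is_write r" using that(2) unfolding last_write_def is_write_def by auto
    then have "r \<in> set xs" using that(1) in_xs by blast
    then have "last_write ?L r w"
      using crp_last_write[OF crp] lw that(2) by simp
    then show ?thesis unfolding last_write_def before_def by blast
  qed
  have locks: "\<exists>r. matches T a r \<and> before ?L a r \<and> before ?L r a'"
    if acq: "act a = Acq y" "act a' = Acq y" "before ?L a a'" for a a' y
  proof -
    have "\<not> is_write a'" using acq(2) unfolding is_write_def by simp
    then have a': "a' \<in> set xs" using acq(3) in_xs unfolding before_def by blast
    then obtain r where r: "matches T a r" "before ?T' a r" "before ?T' r a'"
      using crp_release_between[OF crp] acq order by blast
    then have "before ?L r a'" using order a' by blast
    moreover have "\<not> is_write r" using matches_facts[OF r(1)] unfolding is_write_def by auto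
    ultimately have "r \<in> set xs" using in_xs unfolding before_def by blast
    then show ?thesis using r order a' by blast
  qed
  show ?thesis
    unfolding correctly_reordered_prefix_def
    using dL crp_subset[OF crp] threads last_writes locks by auto
qed

lemma conflicting_not_lock_op:
  "conflicting e f \<Longrightarrow> act e \<noteq> Acq y \<and> act e \<noteq> Rel y \<and> act f \<noteq> Acq y \<and> act f \<noteq> Rel y"
  unfolding conflicting_def accesses_def by auto

lemma crp_adjacent_lockset_disjoint:
  assumes crp: "correctly_reordered_prefix (xs @ e # f # ys) T" and dT: "distinct T"
    and cf: "conflicting e f"
  shows "lockset T e \<inter> lockset T f = {}"
proof (rule ccontr)
  let ?T' = "xs @ e # f # ys"
  assume "lockset T e \<inter> lockset T f \<noteq> {}"
  then obtain y a r a' r' where cs: "in_CS T a r e" "act a = Acq y"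
    and cs': "in_CS T a' r' f" "act a' = Acq y"
    unfolding lockset_def by blast
  have dT': "distinct ?T'" using crp_distinct[OF crp] .
  have ef: "before ?T' e f" using dT' before_append_Cons_right_iff by simp
  have "before ?T' a e" "before ?T' a' f"
    using in_CS_acquire_in_crp[OF crp dT cs(1)] in_CS_acquire_in_crp[OF crp dT cs'(1)]
      conflicting_not_lock_op[OF cf] cs(2) cs'(2) by fastforce+
  moreover have "a \<noteq> a'" using cs cs' cf unfolding in_CS_def conflicting_def by auto
  ultimately consider "before ?T' a a'" | "before ?T' a' a"
    using before_total[OF dT'] unfolding before_def by blast
  then show False
  proof cases
    case 1
    then have rf: "before ?T' r f"
      using release_before_in_CS_in_crp[OF crp dT _ cs'(1)] cs cs' in_CS_def by auto
    then have "before ?T' e r"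
      using in_CS_before_release_in_crp[OF crp dT cs(1)] conflicting_not_lock_op[OF cf]
        matches_facts cs(1) unfolding in_CS_def before_def by metis
    then show False using between_mem[of xs e "[]" f ys r] dT' rf by simp
  next
    case 2
    then have r'e: "before ?T' r' e"
      using release_before_in_CS_in_crp[OF crp dT _ cs(1)] cs cs' in_CS_def by auto
    then have "before ?T' f r'"
      using in_CS_before_release_in_crp[OF crp dT cs'(1)] conflicting_not_lock_op[OF cf]
        matches_facts cs'(1) unfolding in_CS_def before_def by metis
    then show False using r'e ef before_trans before_asym by metis
  qed
qed

lemma crp_adjacent_write_pwr_unordered:
  assumes crp: "correctly_reordered_prefix (xs @ e # f # ys) T" and dT: "distinct T"
    and "is_write f" "tid e \<noteq> tid f"
  shows "\<not> pwr T e f \<and> \<not> pwr T f e"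
proof -
  let ?T' = "xs @ e # f # ys"
  have dT': "distinct ?T'" using crp_distinct[OF crp] .
  have "before ?T' e f" using dT' before_append_Cons_right_iff by simp
  then have "\<not> pwr T f e"
    using pwr_in_crp[OF _ crp dT] before_asym unfolding before_def by blast
  moreover have "\<not> pwr T e f"
  proof
    assume "pwr T e f"
    then have "e \<in> set (xs @ [f])"
      using pwr_in_crp[OF _ crp_drop_before_write[OF crp assms(3,4)] dT]
      unfolding before_def by simp
    then show False using dT' assms(4) by auto
  qed
  ultimately show ?thesis by blast
qed

lemma crp_adjacent_no_pwr_between:
  assumes crp: "correctly_reordered_prefix (xs @ e # f # ys) T" and dT: "distinct T"
  shows "\<not> (pwr T e g \<and> pwr T g f)"
proof
  let ?T' = "xs @ e # f # ys"
  assume "pwr T e g \<and> pwr T g f"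
  then have "before ?T' g f" "before ?T' e g"
    using pwr_in_crp[OF _ crp dT] before_append_Cons_right_iff crp_distinct[OF crp]
    unfolding before_def by auto
  then show False using between_mem[of xs e "[]" f ys g] crp_distinct[OF crp] by simp
qed

lemma crp_adjacent_last_write:
  assumes crp: "correctly_reordered_prefix (xs @ e # f # ys) T" and dT: "distinct T"
    and iw: "initial_write T" and "act e = Wr x" "act f = Rd x"
  shows "last_write T f e"
proof -
  let ?T' = "xs @ e # f # ys"
  have dT': "distinct ?T'" using crp_distinct[OF crp] .
  have "f \<in> set T" using crp_subset[OF crp] by auto
  then obtain w where lw: "last_write T f w" using last_write_exists[OF dT iw] assms(5) by blast
  then have lw': "last_write ?T' f w" using crp_last_write[OF crp] by simp
  have "w = e"
  proof (rule ccontr)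
    assume "w \<noteq> e"
    moreover have "w \<in> set (xs @ [e])"
      using lw' dT' before_append_Cons_left_iff[of "xs @ [e]" f ys w]
      unfolding last_write_def by auto
    ultimately have "w \<in> set xs" by simp
    then have "strictly_between ?T' w e f"
      using dT' before_append_Cons_left_iff before_append_Cons_right_iff
      unfolding strictly_between_def by simp
    then show False using lw' assms(4,5) unfolding last_write_def by auto
  qed
  then show ?thesis using lw by simp
qed

theorem mainTheorem1:
  assumes "well_formed T" and "initial_write T"
  shows "P T \<subseteq> P_PWR T"
proof
  fix p assume "p \<in> P T"
  then obtain e f T' i where p: "p = (e, f)" and cf: "conflicting e f"
    and crp: "correctly_reordered_prefix T' T" and i: "Suc i < length T'" "T' ! i = e" "T' ! Suc i = f"
    unfolding P_def predictable_race_def by blast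
  have dT: "distinct T" using assms(1) unfolding well_formed_def by blast
  have "T' = take i T' @ e # f # drop (Suc (Suc i)) T'"
    using i by (metis Cons_nth_drop_Suc Suc_lessD append_take_drop_id)
  then obtain xs ys where crp': "correctly_reordered_prefix (xs @ e # f # ys) T"
    using crp by metis
  have locks: "lockset T e \<inter> lockset T f = {}"
    using crp_adjacent_lockset_disjoint[OF crp' dT cf] .
  show "p \<in> P_PWR T"
  proof (cases "is_write f")
    case True
    then have "potential_pwr T e f"
      using crp_adjacent_write_pwr_unordered[OF crp' dT] cf locks
      unfolding potential_pwr_def conflicting_def accesses_def is_read_def is_write_def by auto
    then show ?thesis using p unfolding P_PWR_def by blast
  next
    case False
    then obtain x where "act e = Wr x" "act f = Rd x"
      using cf unfolding conflicting_def accesses_def is_write_def by auto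
    then have "potential_pwr_wrd T e f"
      using crp_adjacent_last_write[OF crp' dT assms(2)] pwr.WRD
        crp_adjacent_no_pwr_between[OF crp' dT] cf locks
      unfolding potential_pwr_wrd_def is_read_def is_write_def by blast
    then show ?thesis using p unfolding P_PWR_def by blast
  qed
qed

end
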